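(* Let $m=2^ab$ with $a>0$ and $b$ odd. Then $$|M_1^m|=2^a\psi(b)=\Big[\Gamma_0(2):\Gamma_0(2)\cap\begin{bmatrix}1&0\\0&m\end{bmatrix}^{-1}\Gamma_0(2)^+\begin{bmatrix}1&0\\0&m\end{bmatrix}\Big].$$
   Context: For a positive integer $n$, $\psi(n)=n\prod_{p\mid n,\ p\text{ prime}}(1-\frac1p)$. Matrices are in $GL_2^+(\mathbb{R})$ considered up to sign; $\Gamma_0(2)=\{\begin{bmatrix}a&b\\c&d\end{bmatrix}\in SL_2(\mathbb{Z}): c\equiv0\pmod 2\}$, $w_2=2^{-1/2}\begin{bmatrix}0&-1\\2&0\end{bmatrix}$, $\Gamma_0(2)^+$ is the group generated by $\Gamma_0(2)$ and $w_2$. $M_1^m=\{\begin{bmatrix}x&y\\0&z\end{bmatrix}: x,y,z\in\mathbb{Z},\ x,z>0,\ xz=m,\ 0\leq y<z,\ \gcd(x,y,z)=1,\ x\text{ odd}\}$. *)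

theory Defs
  imports "HOL-Analysis.Analysis" "HOL-Computational_Algebra.Primes"
begin

definition dpsi :: "nat \<Rightarrow> real" where
  "dpsi n = real n * (\<Prod>p\<in>prime_factors n. (1 + 1 / real p))"

text \<open>The set M_1^m of upper triangular integer matrices, as triples (x,y,z).\<close>
definition M1 :: "nat \<Rightarrow> (int \<times> int \<times> int) set" where
  "M1 m = {(x, y, z). x > 0 \<and> z > 0 \<and> x * z = int m \<and> 0 \<le> y \<and> y < z
              \<and> gcd x (gcd y z) = 1 \<and> odd x}"

definition mat2 :: "real \<Rightarrow> real \<Rightarrow> real \<Rightarrow> real \<Rightarrow> real^2^2" where
  "mat2 a b c d = (\<chi> i j. if i = 1 then (if j = 1 then a else b)
                              else (if j = 1 then c else d))"

definition Gamma0_2 :: "(real^2^2) set" where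
  "Gamma0_2 = {A. (\<forall>i j. A$i$j \<in> \<int>) \<and> det A = 1 \<and> A$2$1 / 2 \<in> \<int>}"

definition w2 :: "real^2^2" where
  "w2 = (1 / sqrt 2) *\<^sub>R mat2 0 (-1) 2 0"

inductive_set Gamma0_2_plus :: "(real^2^2) set" where
  base: "A \<in> Gamma0_2 \<Longrightarrow> A \<in> Gamma0_2_plus"
| gen: "w2 \<in> Gamma0_2_plus"
| mult: "A \<in> Gamma0_2_plus \<Longrightarrow> B \<in> Gamma0_2_plus \<Longrightarrow> A ** B \<in> Gamma0_2_plus"
| inv: "A \<in> Gamma0_2_plus \<Longrightarrow> matrix_inv A \<in> Gamma0_2_plus"

definition subgroup_index :: "(real^2^2) set \<Rightarrow> (real^2^2) set \<Rightarrow> nat" where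
  "subgroup_index G H = card {(\<lambda>h. g ** h) ` H | g. g \<in> G}"

definition conj_by :: "real^2^2 \<Rightarrow> (real^2^2) set \<Rightarrow> (real^2^2) set" where
  "conj_by g S = (\<lambda>h. matrix_inv g ** h ** g) ` S"

end

theory Submission
  imports Defs "HOL-Number_Theory.Cong"
begin

text \<open>
  The group \<open>\<Gamma>\<^sub>0(2)\<^sup>+\<close> is \<open>\<Gamma>\<^sub>0(2)\<close> together with the coset \<open>w\<^sub>2 \<Gamma>\<^sub>0(2)\<close>, whose matrices have first
  column in \<open>\<surd>2 \<int>\<close>. Conjugation by \<open>\<alpha> = diag(1, m)\<close> leaves the first column alone and divides the
  upper-right entry by \<open>m\<close>, so \<open>\<Gamma>\<^sub>0(2) \<inter> \<alpha>\<^sup>-\<^sup>1 \<Gamma>\<^sub>0(2)\<^sup>+ \<alpha>\<close> is the group \<open>H\<close> of matrices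
  \<open>[a, b; c, d]\<close> in \<open>\<Gamma>\<^sub>0(2)\<close> with \<open>m | b\<close>. Two matrices of \<open>\<Gamma>\<^sub>0(2)\<close> lie in the same coset of \<open>H\<close> iff
  their second columns \<open>(b, d)\<close> are proportional modulo \<open>m\<close>; such a column (with \<open>d\<close> odd and
  \<open>gcd(b, d) = 1\<close>) has exactly one representative \<open>[x, y; 0, z]\<close> in \<open>M\<^sub>1\<^sup>m\<close> with \<open>x | d\<close> and
  \<open>m | x b + y d\<close>, i.e. with \<open>[x, y; 0, z] g \<alpha>\<^sup>-\<^sup>1\<close> integral. Hence the index is \<open>|M\<^sub>1\<^sup>m|\<close>.

  For \<open>m = 2\<^sup>a b\<close>, the elements of \<open>M\<^sub>1\<^sup>m\<close> arise uniquely from primitive Hermite forms of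
  determinant \<open>b\<close> by scaling \<open>z\<close> by \<open>2\<^sup>a\<close> and shifting \<open>y\<close> by one of \<open>2\<^sup>a\<close> multiples of \<open>z\<close>. The
  number of primitive Hermite forms of determinant \<open>n\<close> is multiplicative in \<open>n\<close> (Chinese remainder
  theorem) and equals \<open>p\<^sup>k + p\<^sup>k\<^sup>-\<^sup>1\<close> for \<open>n = p\<^sup>k\<close>, so it is \<open>dpsi n\<close>.
\<close>

section \<open>\<open>2 \<times> 2\<close> matrices\<close>

lemma mat2_nth [simp]:
  "mat2 a b c d $ 1 $ 1 = a" "mat2 a b c d $ 1 $ 2 = b"
  "mat2 a b c d $ 2 $ 1 = c" "mat2 a b c d $ 2 $ 2 = d"
  by (simp_all add: mat2_def)

lemma mat2_eta: "A = mat2 (A$1$1) (A$1$2) (A$2$1) (A$2$2)"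
  by (simp add: mat2_def vec_eq_iff forall_2)

lemma mat2_eq_iff [simp]:
  "mat2 a b c d = mat2 a' b' c' d' \<longleftrightarrow> a = a' \<and> b = b' \<and> c = c' \<and> d = d'"
  by (metis mat2_nth)

lemma mat2_mult:
  "mat2 a b c d ** mat2 a' b' c' d' = mat2 (a*a' + b*c') (a*b' + b*d') (c*a' + d*c') (c*b' + d*d')"
  by (subst mat2_eta) (simp add: matrix_matrix_mult_def sum_2)

lemma det_mat2 [simp]: "det (mat2 a b c d) = a*d - b*c"
  by (simp add: det_2)

lemma mat_1_eq_mat2: "mat 1 = mat2 1 0 0 1"
  by (subst mat2_eta) (simp add: mat_def)

lemma scaleR_mat2: "r *\<^sub>R mat2 a b c d = mat2 (r*a) (r*b) (r*c) (r*d)"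
  by (subst mat2_eta) simp

lemma matrix_inv_eqI:
  fixes A B :: "'a::semiring_1^'n^'n"
  assumes "A ** B = mat 1" "B ** A = mat 1"
  shows "matrix_inv A = B"
proof -
  have inv: "A ** matrix_inv A = mat 1 \<and> matrix_inv A ** A = mat 1"
    unfolding matrix_inv_def by (rule someI[of _ B]) (use assms in auto)
  have "matrix_inv A = (B ** A) ** matrix_inv A"
    using assms by (simp add: matrix_mul_lid)
  also have "\<dots> = B"
    using inv by (simp add: matrix_mul_assoc[symmetric] matrix_mul_rid)
  finally show ?thesis .
qed

lemma matrix_inv_invertible:
  fixes A :: "'a::semiring_1^'n^'m"
  assumes "invertible A"
  shows "A ** matrix_inv A = mat 1" "matrix_inv A ** A = mat 1"
  using someI_ex[OF assms[unfolded invertible_def]] by (simp_all add: matrix_inv_def)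

lemma matrix_inv_mat2:
  assumes "a*d - b*c = 1"
  shows "matrix_inv (mat2 a b c d) = mat2 d (-b) (-c) a"
  by (rule matrix_inv_eqI) (use assms in \<open>simp_all add: mat2_mult mat_1_eq_mat2 algebra_simps\<close>)

lemma matrix_inv_diag2:
  assumes "r \<noteq> 0"
  shows "matrix_inv (mat2 1 0 0 r) = mat2 1 0 0 (1 / r)"
  by (rule matrix_inv_eqI) (use assms in \<open>simp_all add: mat2_mult mat_1_eq_mat2\<close>)

text \<open>A constant rather than an abbreviation, so that the simplifier keeps the integer entries
  intact.\<close>
definition imat2 :: "int \<Rightarrow> int \<Rightarrow> int \<Rightarrow> int \<Rightarrow> real^2^2" where
  "imat2 a b c d = mat2 (of_int a) (of_int b) (of_int c) (of_int d)"

lemma imat2_nth [simp]: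
  "imat2 a b c d $ 1 $ 1 = of_int a" "imat2 a b c d $ 1 $ 2 = of_int b"
  "imat2 a b c d $ 2 $ 1 = of_int c" "imat2 a b c d $ 2 $ 2 = of_int d"
  by (simp_all add: imat2_def)

lemma imat2_eq_iff [simp]:
  "imat2 a b c d = imat2 a' b' c' d' \<longleftrightarrow> a = a' \<and> b = b' \<and> c = c' \<and> d = d'"
  by (simp add: imat2_def)

lemma imat2_mult:
  "imat2 a b c d ** imat2 a' b' c' d' = imat2 (a*a' + b*c') (a*b' + b*d') (c*a' + d*c') (c*b' + d*d')"
  by (simp add: imat2_def mat2_mult)

lemma mat_1_eq_imat2: "mat 1 = imat2 1 0 0 1"
  by (simp add: imat2_def mat_1_eq_mat2)

lemma matrix_inv_imat2:
  assumes "a*d - b*c = 1"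
  shows "matrix_inv (imat2 a b c d) = imat2 d (-b) (-c) a"
proof -
  have "real_of_int a * of_int d - of_int b * of_int c = 1"
    using arg_cong[OF assms, of real_of_int] by simp
  then show ?thesis by (simp add: imat2_def matrix_inv_mat2)
qed

section \<open>The groups \<open>\<Gamma>\<^sub>0(N) \<inter> \<Gamma>\<^sup>0(M)\<close>\<close>
definition Gamma00 :: "int \<Rightarrow> int \<Rightarrow> (real^2^2) set" where
  "Gamma00 N M = {imat2 a b c d | a b c d. a*d - b*c = 1 \<and> N dvd c \<and> M dvd b}"

lemma imat2_in_Gamma00_iff [simp]:
  "imat2 a b c d \<in> Gamma00 N M \<longleftrightarrow> a*d - b*c = 1 \<and> N dvd c \<and> M dvd b"
  by (auto simp: Gamma00_def)

lemma Gamma00_cases: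
  assumes "A \<in> Gamma00 N M"
  obtains a b c d where "A = imat2 a b c d" "a*d - b*c = 1" "N dvd c" "M dvd b"
  using assms by (auto simp: Gamma00_def)

lemma Gamma0_2_eq_Gamma00: "Gamma0_2 = Gamma00 2 1"
proof (intro set_eqI iffI)
  fix A assume "A \<in> Gamma0_2"
  then have "\<forall>i j. A$i$j \<in> \<int>" and "det A = 1" "A$2$1 / 2 \<in> \<int>"
    by (auto simp: Gamma0_2_def)
  then obtain a b c d where A: "A = imat2 a b c d"
    using mat2_eta[of A] unfolding imat2_def by (metis Ints_cases)
  obtain c' where "of_int c / 2 = (of_int c' :: real)"
    using \<open>A$2$1 / 2 \<in> \<int>\<close> A by (auto elim: Ints_cases)
  then have "c = 2 * c'" by linarith
  moreover have "a*d - b*c = 1"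
  proof -
    have "real_of_int (a*d - b*c) = 1"
      using \<open>det A = 1\<close> A by (simp add: imat2_def)
    then show ?thesis by (simp only: of_int_eq_1_iff)
  qed
  ultimately show "A \<in> Gamma00 2 1"
    unfolding A by simp
next
  fix A assume "A \<in> Gamma00 2 1"
  then obtain a b c d where A: "A = imat2 a b c d" "a*d - b*c = 1" "2 dvd c"
    by (rule Gamma00_cases)
  then obtain c' where "real_of_int c / 2 = of_int c'" by fastforce
  moreover have "real_of_int a * of_int d - of_int b * of_int c = 1"
    using arg_cong[OF A(2), of real_of_int] by simp
  ultimately show "A \<in> Gamma0_2"
    unfolding Gamma0_2_def A(1) by (auto simp: forall_2 imat2_def)
qed

definition matrix_subgroup :: "('a::semiring_1^'n^'n) set \<Rightarrow> bool" where
  "matrix_subgroup H \<longleftrightarrow> mat 1 \<in> H \<and> (\<forall>A\<in>H. \<forall>B\<in>H. A ** B \<in> H)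
     \<and> (\<forall>A\<in>H. invertible A \<and> matrix_inv A \<in> H)"

lemma matrix_subgroup_Gamma00: "matrix_subgroup (Gamma00 N M)"
  unfolding matrix_subgroup_def
proof (intro conjI ballI)
  show "mat 1 \<in> Gamma00 N M"
    by (simp add: mat_1_eq_imat2)
next
  fix A B assume "A \<in> Gamma00 N M" "B \<in> Gamma00 N M"
  then obtain a b c d a' b' c' d' where
    A: "A = imat2 a b c d" "a*d - b*c = 1" "N dvd c" "M dvd b" and
    B: "B = imat2 a' b' c' d'" "a'*d' - b'*c' = 1" "N dvd c'" "M dvd b'"
    by (metis Gamma00_cases)
  have "(a*a' + b*c') * (c*b' + d*d') - (a*b' + b*d') * (c*a' + d*c') = (a*d - b*c) * (a'*d' - b'*c')"
    by algebra
  then show "A ** B \<in> Gamma00 N M"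
    unfolding A(1) B(1) imat2_mult using A B by simp
next
  fix A assume "A \<in> Gamma00 N M"
  then obtain a b c d where A: "A = imat2 a b c d" "a*d - b*c = 1" "N dvd c" "M dvd b"
    by (rule Gamma00_cases)
  have "A ** imat2 d (-b) (-c) a = mat 1" "imat2 d (-b) (-c) a ** A = mat 1"
    unfolding A(1) imat2_mult mat_1_eq_imat2 using A(2) by (simp_all add: algebra_simps)
  moreover have "imat2 d (-b) (-c) a \<in> Gamma00 N M"
    using A(2-4) by (simp add: algebra_simps)
  ultimately show "invertible A" "matrix_inv A \<in> Gamma00 N M"
    unfolding invertible_def A(1) matrix_inv_imat2[OF A(2)] by blast+
qed

lemma left_coset_eq_iff:
  fixes g g' :: "'a::semiring_1^'n^'n"
  assumes H: "matrix_subgroup H" and g: "invertible g"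
  shows "(\<lambda>h. g ** h) ` H = (\<lambda>h. g' ** h) ` H \<longleftrightarrow> matrix_inv g ** g' \<in> H"
proof
  assume eq: "(\<lambda>h. g ** h) ` H = (\<lambda>h. g' ** h) ` H"
  have "g' \<in> (\<lambda>h. g' ** h) ` H"
    using H by (auto simp: matrix_subgroup_def matrix_mul_rid intro: image_eqI[of _ _ "mat 1"])
  then obtain h where "h \<in> H" "g' = g ** h"
    using eq by auto
  then show "matrix_inv g ** g' \<in> H"
    using matrix_inv_invertible[OF g] by (simp add: matrix_mul_assoc matrix_mul_lid)
next
  define k where "k = matrix_inv g ** g'"
  assume "matrix_inv g ** g' \<in> H"
  then have k: "k \<in> H" "invertible k" "matrix_inv k \<in> H"
    using H by (auto simp: k_def matrix_subgroup_def)
  have "H \<subseteq> (\<lambda>h. k ** h) ` H"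
  proof
    fix h assume "h \<in> H"
    moreover have "h = k ** (matrix_inv k ** h)"
      using matrix_inv_invertible[OF k(2)] by (simp add: matrix_mul_assoc)
    ultimately show "h \<in> (\<lambda>h. k ** h) ` H"
      using H k by (auto simp: matrix_subgroup_def)
  qed
  then have kH: "(\<lambda>h. k ** h) ` H = H"
    using H k by (auto simp: matrix_subgroup_def)
  have "g' = g ** k"
    using matrix_inv_invertible[OF g] by (simp add: k_def matrix_mul_assoc)
  then have "(\<lambda>h. g' ** h) ` H = (\<lambda>h. g ** h) ` (\<lambda>h. k ** h) ` H"
    by (simp add: image_image matrix_mul_assoc)
  then show "(\<lambda>h. g ** h) ` H = (\<lambda>h. g' ** h) ` H"
    by (simp add: kH)
qed

section \<open>The conjugate of \<open>\<Gamma>\<^sub>0(2)\<^sup>+\<close>\<close>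

lemma double_square_eq_square_imp_zero:
  fixes p k :: int
  assumes "2 * p^2 = k^2"
  shows "p = 0"
  using assms
proof (induction "nat \<bar>p\<bar>" arbitrary: p k rule: less_induct)
  case less
  show ?case
  proof (rule ccontr)
    assume p0: "p \<noteq> 0"
    have "even (k^2)" using less.prems by (metis dvd_triv_left)
    then obtain k' where k': "k = 2*k'" by auto
    then have "p^2 = 2*k'^2" using less.prems by (simp add: power2_eq_square)
    then have "even (p^2)" by simp
    then obtain p' where p': "p = 2*p'" by auto
    have "2*p'^2 = k'^2" using \<open>p^2 = 2*k'^2\<close> p' by (simp add: power2_eq_square)
    moreover have "nat \<bar>p'\<bar> < nat \<bar>p\<bar>" using p' p0 by auto
    ultimately have "p' = 0" using less.hyps by blast
    then show False using p' p0 by simp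
  qed
qed

lemma sqrt_2_mult_of_int_in_Ints_imp_zero:
  assumes "sqrt 2 * of_int p \<in> \<int>"
  shows "p = 0"
proof -
  obtain k where "sqrt 2 * of_int p = of_int k"
    using assms by (auto elim: Ints_cases)
  then have "real_of_int (2 * p^2) = of_int (k^2)"
    by (metis of_int_mult of_int_numeral of_int_power power_mult_distrib real_sqrt_pow2 zero_le_numeral)
  then show "p = 0"
    by (intro double_square_eq_square_imp_zero) (simp only: of_int_eq_iff)
qed

text \<open>The coset \<open>w\<^sub>2 \<Gamma>\<^sub>0(2)\<close>: \<open>w\<^sub>2 [a, b; 2c, d] = [-\<surd>2 c, -d/\<surd>2; \<surd>2 a, \<surd>2 b]\<close>. Only the inclusion
  of \<open>\<Gamma>\<^sub>0(2)\<^sup>+\<close> in its union with \<open>\<Gamma>\<^sub>0(2)\<close> is needed.\<close>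
definition W2_coset :: "(real^2^2) set" where
  "W2_coset = {mat2 (sqrt 2 * of_int p) (of_int q / sqrt 2) (sqrt 2 * of_int r) (sqrt 2 * of_int t)
                | p q r t. 2*p*t - q*r = 1}"

lemma W2_coset_cases:
  assumes "A \<in> W2_coset"
  obtains p q r t :: int
  where "A = mat2 (sqrt 2 * of_int p) (of_int q / sqrt 2) (sqrt 2 * of_int r) (sqrt 2 * of_int t)"
    "2*p*t - q*r = 1"
  using assms by (auto simp: W2_coset_def)

lemma W2_cosetI:
  "2*p*t - q*r = 1 \<Longrightarrow>
    mat2 (sqrt 2 * of_int p) (of_int q / sqrt 2) (sqrt 2 * of_int r) (sqrt 2 * of_int t) \<in> W2_coset"
  by (auto simp: W2_coset_def)

lemma w2_in_W2_coset: "w2 \<in> W2_coset"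
proof -
  have "w2 = mat2 (sqrt 2 * of_int 0) (of_int (-1) / sqrt 2) (sqrt 2 * of_int 1) (sqrt 2 * of_int 0)"
    unfolding w2_def by (simp add: scaleR_mat2 field_simps)
  also have "\<dots> \<in> W2_coset"
    by (rule W2_cosetI) simp
  finally show ?thesis .
qed

lemma Gamma0_2_mult_W2_coset: "A \<in> Gamma0_2 \<Longrightarrow> B \<in> W2_coset \<Longrightarrow> A ** B \<in> W2_coset"
proof -
  assume "A \<in> Gamma0_2" "B \<in> W2_coset"
  then obtain a b c d p q r t where
    A: "A = imat2 a b (2*c) d" "a*d - b*(2*c) = 1" and
    B: "B = mat2 (sqrt 2 * of_int p) (of_int q / sqrt 2) (sqrt 2 * of_int r) (sqrt 2 * of_int t)"
       "2*p*t - q*r = 1"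
    unfolding Gamma0_2_eq_Gamma00 by (auto elim!: Gamma00_cases W2_coset_cases)
  have eq: "A ** B = mat2 (sqrt 2 * of_int (a*p + b*r)) (of_int (a*q + 2*b*t) / sqrt 2)
     (sqrt 2 * of_int (2*c*p + d*r)) (sqrt 2 * of_int (c*q + d*t))"
    unfolding A B by (simp add: imat2_def mat2_mult field_simps)
  have "2*(a*p + b*r)*(c*q + d*t) - (a*q + 2*b*t)*(2*c*p + d*r) = (a*d - b*(2*c))*(2*p*t - q*r)"
    by algebra
  then show ?thesis
    unfolding eq using A(2) B(2) by (intro W2_cosetI) simp
qed

lemma W2_coset_mult_Gamma0_2: "A \<in> W2_coset \<Longrightarrow> B \<in> Gamma0_2 \<Longrightarrow> A ** B \<in> W2_coset"
proof -
  assume "A \<in> W2_coset" "B \<in> Gamma0_2"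
  then obtain a b c d p q r t where
    B: "B = imat2 a b (2*c) d" "a*d - b*(2*c) = 1" and
    A: "A = mat2 (sqrt 2 * of_int p) (of_int q / sqrt 2) (sqrt 2 * of_int r) (sqrt 2 * of_int t)"
       "2*p*t - q*r = 1"
    unfolding Gamma0_2_eq_Gamma00 by (auto elim!: Gamma00_cases W2_coset_cases)
  have eq: "A ** B = mat2 (sqrt 2 * of_int (p*a + q*c)) (of_int (2*p*b + q*d) / sqrt 2)
     (sqrt 2 * of_int (r*a + 2*t*c)) (sqrt 2 * of_int (r*b + t*d))"
    unfolding A B by (simp add: imat2_def mat2_mult field_simps)
  have "2*(p*a + q*c)*(r*b + t*d) - (2*p*b + q*d)*(r*a + 2*t*c) = (a*d - b*(2*c))*(2*p*t - q*r)"
    by algebra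
  then show ?thesis
    unfolding eq using A(2) B(2) by (intro W2_cosetI) simp
qed

lemma W2_coset_mult_W2_coset: "A \<in> W2_coset \<Longrightarrow> B \<in> W2_coset \<Longrightarrow> A ** B \<in> Gamma0_2"
proof -
  assume "A \<in> W2_coset" "B \<in> W2_coset"
  then obtain p q r t p' q' r' t' where
    A: "A = mat2 (sqrt 2 * of_int p) (of_int q / sqrt 2) (sqrt 2 * of_int r) (sqrt 2 * of_int t)"
       "2*p*t - q*r = 1" and
    B: "B = mat2 (sqrt 2 * of_int p') (of_int q' / sqrt 2) (sqrt 2 * of_int r') (sqrt 2 * of_int t')"
       "2*p'*t' - q'*r' = 1"
    by (auto elim!: W2_coset_cases)
  have "A ** B = imat2 (2*p*p' + q*r') (p*q' + q*t') (2*(r*p' + t*r')) (r*q' + 2*t*t')"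
    unfolding A B by (simp add: imat2_def mat2_mult field_simps)
  moreover have "(2*p*p' + q*r')*(r*q' + 2*t*t') - (p*q' + q*t')*(2*(r*p' + t*r'))
      = (2*p*t - q*r)*(2*p'*t' - q'*r')"
    by algebra
  ultimately show ?thesis
    unfolding Gamma0_2_eq_Gamma00 using A(2) B(2) by simp
qed

lemma matrix_inv_W2_coset: "A \<in> W2_coset \<Longrightarrow> matrix_inv A \<in> W2_coset"
proof -
  assume "A \<in> W2_coset"
  then obtain p q r t where
    A: "A = mat2 (sqrt 2 * of_int p) (of_int q / sqrt 2) (sqrt 2 * of_int r) (sqrt 2 * of_int t)"
       "2*p*t - q*r = 1"
    by (rule W2_coset_cases)
  have "sqrt 2 * of_int p * (sqrt 2 * of_int t) - of_int q / sqrt 2 * (sqrt 2 * of_int r) = 1"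
    using arg_cong[OF A(2), of real_of_int] by (simp add: field_simps)
  then have "matrix_inv A = mat2 (sqrt 2 * of_int t) (of_int (-q) / sqrt 2) (sqrt 2 * of_int (-r)) (sqrt 2 * of_int p)"
    unfolding A(1) by (simp add: matrix_inv_mat2)
  also have "\<dots> \<in> W2_coset"
    using A(2) by (intro W2_cosetI) (simp add: algebra_simps)
  finally show ?thesis .
qed

lemma Gamma0_2_plus_subset: "Gamma0_2_plus \<subseteq> Gamma0_2 \<union> W2_coset"
proof
  fix A assume "A \<in> Gamma0_2_plus"
  then show "A \<in> Gamma0_2 \<union> W2_coset"
  proof (induction rule: Gamma0_2_plus.induct)
    case (mult A B)
    have "A ** B \<in> Gamma0_2" if "A \<in> Gamma0_2" "B \<in> Gamma0_2"
      using that matrix_subgroup_Gamma00[of 2 1]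
      unfolding Gamma0_2_eq_Gamma00 matrix_subgroup_def by blast
    then show ?case
      using mult.IH Gamma0_2_mult_W2_coset W2_coset_mult_Gamma0_2 W2_coset_mult_W2_coset by blast
  next
    case (inv A)
    have "matrix_inv A \<in> Gamma0_2" if "A \<in> Gamma0_2"
      using that matrix_subgroup_Gamma00[of 2 1]
      unfolding Gamma0_2_eq_Gamma00 matrix_subgroup_def by blast
    then show ?case
      using inv.IH matrix_inv_W2_coset by blast
  qed (auto simp: w2_in_W2_coset)
qed

lemma W2_coset_first_column_not_integral:
  assumes "A \<in> W2_coset" "A$1$1 \<in> \<int>" "A$2$1 \<in> \<int>"
  shows False
proof -
  obtain p q r t where
    A: "A = mat2 (sqrt 2 * of_int p) (of_int q / sqrt 2) (sqrt 2 * of_int r) (sqrt 2 * of_int t)"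
       "2*p*t - q*r = 1"
    using assms(1) by (rule W2_coset_cases)
  have "p = 0" "r = 0"
    using assms(2,3) unfolding A(1) by (auto intro: sqrt_2_mult_of_int_in_Ints_imp_zero)
  then show False
    using A(2) by simp
qed

lemma conj_diag2:
  assumes "r \<noteq> 0"
  shows "matrix_inv (mat2 1 0 0 r) ** A ** mat2 1 0 0 r = mat2 (A$1$1) (r * A$1$2) (A$2$1 / r) (A$2$2)"
proof -
  have "matrix_inv (mat2 1 0 0 r) ** A ** mat2 1 0 0 r
      = matrix_inv (mat2 1 0 0 r) ** mat2 (A$1$1) (A$1$2) (A$2$1) (A$2$2) ** mat2 1 0 0 r"
    by (simp only: mat2_eta[symmetric])
  also have "\<dots> = mat2 (A$1$1) (r * A$1$2) (A$2$1 / r) (A$2$2)"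
    using assms by (simp add: matrix_inv_diag2 mat2_mult)
  finally show ?thesis .
qed

lemma Gamma0_2_Int_conj_Gamma0_2_plus:
  assumes "m > 0"
  shows "Gamma0_2 \<inter> conj_by (mat2 1 0 0 (real m)) Gamma0_2_plus = Gamma00 2 (int m)"
proof (intro set_eqI iffI)
  fix A assume A_in: "A \<in> Gamma0_2 \<inter> conj_by (mat2 1 0 0 (real m)) Gamma0_2_plus"
  then obtain a b c d where A: "A = imat2 a b c d" "a*d - b*c = 1" "2 dvd c"
    unfolding Gamma0_2_eq_Gamma00 by (auto elim!: Gamma00_cases)
  obtain h0 where
    h0: "h0 \<in> Gamma0_2_plus" "A = matrix_inv (mat2 1 0 0 (real m)) ** h0 ** mat2 1 0 0 (real m)"
    using A_in unfolding conj_by_def by blast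
  then have "imat2 a b c d = mat2 (h0$1$1) (real m * h0$1$2) (h0$2$1 / real m) (h0$2$2)"
    using A(1) assms by (simp add: conj_diag2)
  then have h0_eq: "h0$1$1 = of_int a" "real m * h0$1$2 = of_int b" "h0$2$1 = of_int (int m * c)"
    using assms by (auto simp: imat2_def field_simps)
  have "h0 \<notin> W2_coset"
    using W2_coset_first_column_not_integral h0_eq(1,3) by (metis Ints_of_int)
  then have "h0 \<in> Gamma0_2"
    using Gamma0_2_plus_subset h0(1) by blast
  then have "h0$1$2 \<in> \<int>"
    by (simp add: Gamma0_2_def)
  then obtain k where "h0$1$2 = of_int k"
    by (elim Ints_cases)
  then have "real_of_int b = of_int (int m * k)"
    using h0_eq(2) by simp
  then have "b = int m * k"
    by (simp only: of_int_eq_iff)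
  then show "A \<in> Gamma00 2 (int m)"
    using A by simp
next
  fix A assume "A \<in> Gamma00 2 (int m)"
  then obtain a b c d where A: "A = imat2 a b c d" "a*d - b*c = 1" "2 dvd c" "int m dvd b"
    by (rule Gamma00_cases)
  then obtain k where b: "b = int m * k"
    by blast
  have "imat2 a k (int m * c) d \<in> Gamma0_2"
    unfolding Gamma0_2_eq_Gamma00 using A(2,3) b by (simp add: algebra_simps)
  moreover have "A = matrix_inv (mat2 1 0 0 (real m)) ** imat2 a k (int m * c) d ** mat2 1 0 0 (real m)"
    unfolding A(1) b using assms by (simp add: conj_diag2 imat2_def)
  moreover have "A \<in> Gamma0_2"
    using A by (simp add: Gamma0_2_eq_Gamma00)
  ultimately show "A \<in> Gamma0_2 \<inter> conj_by (mat2 1 0 0 (real m)) Gamma0_2_plus"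
    unfolding conj_by_def using Gamma0_2_plus.base by blast
qed

lemma Gamma00_left_coset_eq_iff:
  assumes "imat2 a b c d \<in> Gamma00 N 1" "imat2 a' b' c' d' \<in> Gamma00 N 1"
  shows "(\<lambda>h. imat2 a b c d ** h) ` Gamma00 N M = (\<lambda>h. imat2 a' b' c' d' ** h) ` Gamma00 N M
    \<longleftrightarrow> M dvd d*b' - b*d'"
proof -
  have det: "a*d - b*c = 1"
    using assms(1) by simp
  have "invertible (imat2 a b c d)" and in_Gamma0: "matrix_inv (imat2 a b c d) ** imat2 a' b' c' d' \<in> Gamma00 N 1"
    using assms matrix_subgroup_Gamma00[of N 1] unfolding matrix_subgroup_def by blast+
  then have "(\<lambda>h. imat2 a b c d ** h) ` Gamma00 N M = (\<lambda>h. imat2 a' b' c' d' ** h) ` Gamma00 N M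
      \<longleftrightarrow> matrix_inv (imat2 a b c d) ** imat2 a' b' c' d' \<in> Gamma00 N M"
    by (intro left_coset_eq_iff matrix_subgroup_Gamma00)
  also have prod: "matrix_inv (imat2 a b c d) ** imat2 a' b' c' d'
      = imat2 (d*a' - b*c') (d*b' - b*d') (a*c' - c*a') (a*d' - c*b')"
    unfolding matrix_inv_imat2[OF det] imat2_mult by (simp add: algebra_simps)
  finally show ?thesis
    using in_Gamma0 unfolding prod by simp
qed

section \<open>Cosets and \<open>M\<^sub>1\<^sup>m\<close>\<close>

lemma card_image_eq_card_of_classifier:
  assumes unique: "\<And>g. g \<in> G \<Longrightarrow> \<exists>!t. t \<in> B \<and> R g t"
    and surj: "\<And>t. t \<in> B \<Longrightarrow> \<exists>g\<in>G. R g t"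
    and classifies:
      "\<And>g g' t. g \<in> G \<Longrightarrow> g' \<in> G \<Longrightarrow> t \<in> B \<Longrightarrow> R g t \<Longrightarrow> \<phi> g = \<phi> g' \<longleftrightarrow> R g' t"
  shows "card (\<phi> ` G) = card B"
proof -
  define \<sigma> where "\<sigma> t = (SOME g. g \<in> G \<and> R g t)" for t
  have \<sigma>: "\<sigma> t \<in> G" "R (\<sigma> t) t" if "t \<in> B" for t
    using someI_ex[OF surj[OF that, unfolded Bex_def]] by (auto simp: \<sigma>_def)
  have "inj_on (\<lambda>t. \<phi> (\<sigma> t)) B"
  proof (rule inj_onI)
    fix t t' assume t: "t \<in> B" "t' \<in> B" "\<phi> (\<sigma> t) = \<phi> (\<sigma> t')"
    then have "R (\<sigma> t') t"
      using classifies \<sigma> by blast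
    then show "t = t'"
      using unique[OF \<sigma>(1)[OF t(2)]] \<sigma>(2)[OF t(2)] t(1,2) by blast
  qed
  moreover have "(\<lambda>t. \<phi> (\<sigma> t)) ` B = \<phi> ` G"
  proof
    show "(\<lambda>t. \<phi> (\<sigma> t)) ` B \<subseteq> \<phi> ` G"
      using \<sigma> by blast
  next
    show "\<phi> ` G \<subseteq> (\<lambda>t. \<phi> (\<sigma> t)) ` B"
    proof
      fix v assume "v \<in> \<phi> ` G"
      then obtain g t where "g \<in> G" "v = \<phi> g" "t \<in> B" "R g t"
        using unique by blast
      then have "v = \<phi> (\<sigma> t)"
        using classifies[OF \<sigma>(1) _ _ \<sigma>(2)] by metis
      then show "v \<in> (\<lambda>t. \<phi> (\<sigma> t)) ` B"
        using \<open>t \<in> B\<close> by blast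
    qed
  qed
  ultimately show ?thesis
    using card_image by fastforce
qed

lemma mem_M1_iff:
  "(x, y, z) \<in> M1 m \<longleftrightarrow>
    x > 0 \<and> z > 0 \<and> x * z = int m \<and> 0 \<le> y \<and> y < z \<and> gcd x (gcd y z) = 1 \<and> odd x"
  by (simp add: M1_def)

lemma prime_dvd_prod_prime_factors_not_dvd_iff:
  fixes p x y :: int
  assumes "prime p" "p dvd x" "x \<noteq> 0"
  shows "p dvd \<Prod>{q \<in> prime_factors x. \<not> q dvd y} \<longleftrightarrow> \<not> p dvd y"
proof
  assume "p dvd \<Prod>{q \<in> prime_factors x. \<not> q dvd y}"
  then obtain q where q: "q \<in> prime_factors x" "\<not> q dvd y" "p dvd q"
    using prime_dvd_prod_iff[OF _ assms(1), of _ id] by auto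
  then have "p = q"
    using assms(1) prime_ge_0_int[OF assms(1)] by (auto intro: primes_dvd_imp_eq)
  then show "\<not> p dvd y"
    using q(2) by simp
next
  assume "\<not> p dvd y"
  then show "p dvd \<Prod>{q \<in> prime_factors x. \<not> q dvd y}"
    using assms by (intro dvd_prodI) (auto simp: in_prime_factors_iff)
qed

text \<open>Take \<open>t\<close> to be the product of the primes of \<open>x\<close> not dividing \<open>y\<close>.\<close>
lemma coprime_mult_sub_exists:
  fixes x y z :: int
  assumes "x \<noteq> 0" and "gcd x (gcd y z) = 1"
  shows "\<exists>t. coprime (t*z - y) x"
proof -
  define t where "t = \<Prod>{p \<in> prime_factors x. \<not> p dvd y}"
  have "coprime (t*z - y) x"
  proof (rule ccontr)
    assume "\<not> coprime (t*z - y) x"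
    then have "\<not> is_unit (gcd (t*z - y) x)" and "gcd (t*z - y) x \<noteq> 0"
      using assms(1) by (simp_all add: coprime_iff_gcd_eq_1 is_unit_gcd)
    then obtain p where "prime p" "p dvd gcd (t*z - y) x"
      using prime_divisorE by blast
    then have p: "prime p" "p dvd t*z - y" "p dvd x"
      by simp_all
    have p_dvd_t_iff: "p dvd t \<longleftrightarrow> \<not> p dvd y"
      unfolding t_def using p(1,3) assms(1) by (rule prime_dvd_prod_prime_factors_not_dvd_iff)
    show False
    proof (cases "p dvd y")
      case True
      have "\<not> p dvd z"
      proof
        assume "p dvd z"
        then have "p dvd gcd x (gcd y z)" using True p(3) by simp
        then show False using assms(2) p(1) by (simp add: not_prime_unit)
      qed
      then have "\<not> p dvd t*z"
        using p(1) True p_dvd_t_iff by (simp add: prime_dvd_mult_iff)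
      moreover have "p dvd t*z"
        using dvd_add[OF p(2) True] by simp
      ultimately show False by contradiction
    next
      case False
      then have "p dvd t*z" using p_dvd_t_iff by simp
      then have "p dvd y" using dvd_diff[OF _ p(2)] by fastforce
      then show False using False by contradiction
    qed
  qed
  then show ?thesis by blast
qed

lemma coprime_of_det:
  fixes a b c d :: int
  assumes "a*d - b*c = 1"
  shows "coprime b d"
proof (rule coprimeI)
  fix e assume "e dvd b" "e dvd d"
  then have "e dvd a*d - b*c" by simp
  then show "is_unit e" using assms by simp
qed

lemma linear_congruence_solution:
  fixes b d z :: int
  assumes "coprime d z" "z > 0"
  shows "\<exists>y. 0 \<le> y \<and> y < z \<and> z dvd b + y*d"
proof -
  obtain u w where uw: "u*d + w*z = 1"
    using assms(1) by (metis bezout_int coprime_iff_gcd_eq_1)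
  define y where "y = (-b*u) mod z"
  define q where "q = (-b*u) div z"
  have y_eq: "y = -b*u - z*q"
    unfolding y_def q_def by (simp add: minus_div_mult_eq_mod[symmetric])
  have "1 - u*d = w*z"
    using uw by linarith
  have "b + y*d = b*(1 - u*d) - z*q*d"
    unfolding y_eq by (simp add: algebra_simps)
  also have "\<dots> = z*(b*w - q*d)"
    unfolding \<open>1 - u*d = w*z\<close> by (simp add: algebra_simps)
  finally have "z dvd b + y*d"
    by simp
  moreover have "0 \<le> y" "y < z"
    unfolding y_def using assms(2) by simp_all
  ultimately show ?thesis
    by blast
qed

lemma M1_representative_exists:
  fixes b d :: int
  assumes "m > 0" "coprime b d" "odd d"
  shows "\<exists>x y z. (x, y, z) \<in> M1 m \<and> x dvd d \<and> int m dvd x*b + y*d"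
proof -
  define x where "x = gcd d (int m)"
  define z where "z = int m div x"
  define d1 where "d1 = d div x"
  have x: "x > 0" "x dvd d" "x dvd int m" "odd x"
    using assms(1,3) unfolding x_def by (auto dest: dvd_trans[of 2])
  have m: "int m = x*z" and d: "d = x*d1"
    unfolding z_def d1_def using x by simp_all
  have "z > 0"
    using m x(1) assms(1) by (metis of_nat_0_less_iff zero_less_mult_pos)
  have "coprime d1 z"
    unfolding d1_def z_def x_def using assms(1) by (intro div_gcd_coprime) simp
  then obtain y where y: "0 \<le> y" "y < z" "z dvd b + y*d1"
    using linear_congruence_solution[OF _ \<open>z > 0\<close>] by blast
  then have "x*z dvd x*(b + y*d1)"
    by simp
  moreover have "x*(b + y*d1) = x*b + y*d"
    unfolding d by (simp add: algebra_simps)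
  ultimately have "int m dvd x*b + y*d"
    unfolding m by simp
  moreover have "gcd x (gcd y z) = 1"
  proof -
    let ?e = "gcd x (gcd y z)"
    have e: "?e dvd x" "?e dvd y" "?e dvd z"
      by (meson dvd_trans gcd_dvd1 gcd_dvd2)+
    then have "?e dvd (b + y*d1) - y*d1"
      using y(3) by (intro dvd_diff) (auto intro: dvd_trans)
    then have "?e dvd b"
      by simp
    moreover have "?e dvd d"
      using e(1) x(2) by (rule dvd_trans)
    ultimately have "is_unit ?e"
      using assms(2) coprime_common_divisor by blast
    then show ?thesis by simp
  qed
  ultimately have "(x, y, z) \<in> M1 m \<and> x dvd d \<and> int m dvd x*b + y*d"
    using x \<open>z > 0\<close> m y by (simp add: mem_M1_iff)
  then show ?thesis by blast
qed

lemma M1_representative_reduce: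
  fixes b d :: int
  assumes "coprime b d" "(x, y, z) \<in> M1 m" "x dvd d" "int m dvd x*b + y*d"
  shows "x = gcd d (int m)" "coprime (d div x) z" "z dvd b + y * (d div x)"
proof -
  have M: "x > 0" "z > 0" "x*z = int m"
    using assms(2) by (simp_all add: mem_M1_iff)
  have d: "d = x * (d div x)"
    using assms(3) by simp
  have "gcd d (int m) dvd x"
  proof -
    have "gcd d (int m) dvd (x*b + y*d) - y*d"
      using assms(4) by (intro dvd_diff) (auto intro: dvd_trans)
    then have "gcd d (int m) dvd x*b"
      by simp
    moreover have "coprime (gcd d (int m)) b"
      using assms(1) by (meson coprime_commute coprime_divisors dvd_refl gcd_dvd1)
    ultimately show ?thesis
      by (simp add: coprime_dvd_mult_left_iff)
  qed
  moreover have "x dvd gcd d (int m)"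
    using assms(3) M(3) by (metis dvd_triv_left gcd_greatest)
  ultimately show x: "x = gcd d (int m)"
    using M(1) by (simp add: zdvd_antisym_nonneg)
  have "z = int m div x"
    using M(1) by (simp flip: M(3))
  moreover have "int m \<noteq> 0"
    using M by (metis mult_pos_pos less_irrefl)
  then have "coprime (d div gcd d (int m)) (int m div gcd d (int m))"
    by (intro div_gcd_coprime) simp
  ultimately show "coprime (d div x) z"
    using x by simp
  have "x * z dvd x * (b + y * (d div x))"
    using assms(4) M(3) by (subst (asm) d) (simp add: algebra_simps)
  then show "z dvd b + y * (d div x)"
    using M(1) by simp
qed

lemma M1_representative_unique:
  fixes b d :: int
  assumes "coprime b d"
    and "(x, y, z) \<in> M1 m" "x dvd d" "int m dvd x*b + y*d"
    and "(x', y', z') \<in> M1 m" "x' dvd d" "int m dvd x'*b + y'*d"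
  shows "(x, y, z) = (x', y', z')"
proof -
  note r = M1_representative_reduce[OF assms(1-4)] and r' = M1_representative_reduce[OF assms(1,5-7)]
  have M: "x > 0" "0 \<le> y" "y < z" "x*z = int m" "0 \<le> y'" "y' < z'" "x'*z' = int m"
    using assms(2,5) by (simp_all add: mem_M1_iff)
  have "x = x'"
    using r(1) r'(1) by simp
  moreover have "z = z'"
  proof -
    have "x*z = x*z'"
      using M \<open>x = x'\<close> by simp
    then show ?thesis
      using M(1) by simp
  qed
  moreover have "y = y'"
  proof -
    have "z dvd (b + y * (d div x)) - (b + y' * (d div x))"
      using r(3) r'(3) \<open>x = x'\<close> \<open>z = z'\<close> by (intro dvd_diff) simp_all
    then have "z dvd (y - y') * (d div x)"
      by (simp add: algebra_simps)
    then have "z dvd y - y'"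
      using r(2) by (simp add: coprime_commute coprime_dvd_mult_left_iff)
    then have "y mod z = y' mod z"
      by (simp add: mod_eq_dvd_iff)
    then show ?thesis
      using M \<open>z = z'\<close> by simp
  qed
  ultimately show ?thesis by simp
qed

lemma dvd_cross_diff_iff:
  fixes z d1 b y b' d1' :: int
  assumes "coprime d1 z" "z dvd b + y*d1"
  shows "z dvd d1*b' - b*d1' \<longleftrightarrow> z dvd b' + y*d1'"
proof -
  have "z dvd d1'*(b + y*d1)"
    using assms(2) by simp
  then have "z dvd d1*b' - b*d1' \<longleftrightarrow> z dvd (d1*b' - b*d1') + d1'*(b + y*d1)"
    by (simp add: dvd_add_left_iff)
  also have "(d1*b' - b*d1') + d1'*(b + y*d1) = d1*(b' + y*d1')"
    by (simp add: algebra_simps)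
  also have "z dvd d1*(b' + y*d1') \<longleftrightarrow> z dvd b' + y*d1'"
    using assms(1) by (simp add: coprime_commute coprime_dvd_mult_right_iff)
  finally show ?thesis .
qed

lemma M1_representative_change:
  fixes b d b' d' :: int
  assumes "coprime b d" "(x, y, z) \<in> M1 m" "x dvd d" "int m dvd x*b + y*d"
  shows "int m dvd d*b' - b*d' \<longleftrightarrow> x dvd d' \<and> int m dvd x*b' + y*d'"
proof -
  note r = M1_representative_reduce[OF assms]
  define d1 where "d1 = d div x"
  have M: "x > 0" "int m = x*z"
    using assms(2) by (simp_all add: mem_M1_iff)
  have d: "d = x*d1"
    unfolding d1_def using assms(3) by simp
  have same_rep: "int m dvd d*b' - b*d' \<longleftrightarrow> int m dvd x*b' + y*d'" if d': "d' = x*d1'" for d1'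
  proof -
    have "int m dvd d*b' - b*d' \<longleftrightarrow> x*z dvd x*(d1*b' - b*d1')"
      unfolding M(2) d d' by (simp add: algebra_simps)
    also have "\<dots> \<longleftrightarrow> z dvd b' + y*d1'"
      using M(1) dvd_cross_diff_iff[OF r(2,3)] unfolding d1_def by simp
    also have "\<dots> \<longleftrightarrow> x*z dvd x*(b' + y*d1')"
      using M(1) by simp
    also have "\<dots> \<longleftrightarrow> int m dvd x*b' + y*d'"
      unfolding M(2) d' by (simp add: algebra_simps)
    finally show ?thesis .
  qed
  show ?thesis
  proof
    assume m_dvd: "int m dvd d*b' - b*d'"
    have "x dvd int m"
      using M(2) by simp
    then have "x dvd d*b' - b*d'"
      using m_dvd by (rule dvd_trans)
    with assms(3) have "x dvd d*b' - (d*b' - b*d')"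
      by (rule dvd_diff[OF dvd_mult2])
    then have "x dvd b*d'"
      by simp
    moreover have "coprime x b"
      using assms(1,3) by (meson coprime_commute coprime_divisors dvd_refl)
    ultimately have "x dvd d'"
      by (simp add: coprime_dvd_mult_right_iff)
    then show "x dvd d' \<and> int m dvd x*b' + y*d'"
      using same_rep m_dvd by blast
  next
    assume "x dvd d' \<and> int m dvd x*b' + y*d'"
    then show "int m dvd d*b' - b*d'"
      using same_rep by blast
  qed
qed

lemma M1_representative_realized:
  assumes "(x, y, z) \<in> M1 m"
  shows "\<exists>a b c d. a*d - b*c = 1 \<and> even c \<and> x dvd d \<and> int m dvd x*b + y*d"
proof -
  have M: "x > 0" "x*z = int m" "gcd x (gcd y z) = 1" "odd x"
    using assms by (simp_all add: mem_M1_iff)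
  obtain t where "coprime (t*z - y) x"
    using coprime_mult_sub_exists[of x y z] M by auto
  moreover have "coprime 2 x"
    using M(4) by simp
  ultimately have "coprime (2*(t*z - y)) x"
    using coprime_mult_left_iff by blast
  then obtain u w where uw: "u*(2*(t*z - y)) + w*x = 1"
    by (metis bezout_int coprime_iff_gcd_eq_1)
  have "w*x - (t*z - y)*(-2*u) = 1"
    using uw by (simp add: algebra_simps)
  moreover have "x*(t*z - y) + y*x = int m * t"
    using M(2) by (simp add: algebra_simps)
  ultimately show ?thesis
    by (intro exI[of _ w] exI[of _ "t*z - y"] exI[of _ "-2*u"] exI[of _ x]) simp
qed

lemma M1_representative_ex1:
  fixes a b c d :: int
  assumes "m > 0" "a*d - b*c = 1" "even c"
  shows "\<exists>!t. t \<in> M1 m \<and> (case t of (x, y, z) \<Rightarrow> x dvd d \<and> int m dvd x*b + y*d)"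
proof -
  have "odd d"
  proof
    assume "even d"
    then have "even (a*d - b*c)"
      using assms(3) by simp
    then show False
      using assms(2) by simp
  qed
  moreover have "coprime b d"
    using assms(2) by (rule coprime_of_det)
  ultimately show ?thesis
    using M1_representative_exists[OF assms(1)] M1_representative_unique by (auto intro!: ex_ex1I)
qed

lemma index_Gamma00_eq_card_M1:
  assumes "m > 0"
  shows "subgroup_index (Gamma00 2 1) (Gamma00 2 (int m)) = card (M1 m)"
proof -
  define Q :: "(int \<times> int \<times> int \<times> int) set" where "Q = {(a, b, c, d). a*d - b*c = 1 \<and> even c}"
  define coset where "coset = (\<lambda>(a, b, c, d). (\<lambda>h. imat2 a b c d ** h) ` Gamma00 2 (int m))"
  define rep where "rep = (\<lambda>(a::int, b::int, c::int, d::int) (x, y, z::int). x dvd d \<and> int m dvd x*b + y*d)"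
  have Gamma0_2_eq: "Gamma00 2 1 = (\<lambda>(a, b, c, d). imat2 a b c d) ` Q"
    by (auto simp: Gamma00_def Q_def image_def)
  have "{(\<lambda>h. g ** h) ` Gamma00 2 (int m) | g. g \<in> Gamma00 2 1} = coset ` Q"
    unfolding Setcompr_eq_image Gamma0_2_eq image_image coset_def by (intro image_cong) auto
  moreover have "card (coset ` Q) = card (M1 m)"
  proof (rule card_image_eq_card_of_classifier[of Q _ rep])
    fix q assume "q \<in> Q"
    then obtain a b c d where q: "q = (a, b, c, d)" "a*d - b*c = 1" "even c"
      by (auto simp: Q_def)
    then show "\<exists>!t. t \<in> M1 m \<and> rep q t"
      unfolding rep_def using M1_representative_ex1[OF assms q(2,3)] by simp
  next
    fix t assume "t \<in> M1 m"
    then obtain x y z where "t = (x, y, z)" "(x, y, z) \<in> M1 m"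
      by (cases t) auto
    then show "\<exists>q\<in>Q. rep q t"
      using M1_representative_realized unfolding Q_def rep_def by fastforce
  next
    fix q q' t assume "q \<in> Q" "q' \<in> Q" "t \<in> M1 m" "rep q t"
    then obtain a b c d a' b' c' d' x y z where
      q: "q = (a, b, c, d)" "a*d - b*c = 1" "even c" and
      q': "q' = (a', b', c', d')" "a'*d' - b'*c' = 1" "even c'" and
      t: "t = (x, y, z)" "(x, y, z) \<in> M1 m" "x dvd d" "int m dvd x*b + y*d"
      unfolding Q_def rep_def by (cases t) auto
    have "coset q = coset q' \<longleftrightarrow> int m dvd d*b' - b*d'"
      unfolding q(1) q'(1) coset_def using q q' by (simp add: Gamma00_left_coset_eq_iff)
    also have "\<dots> \<longleftrightarrow> rep q' t"
      unfolding q'(1) t(1) rep_def using M1_representative_change[OF coprime_of_det[OF q(2)] t(2-4)]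
      by simp
    finally show "coset q = coset q' \<longleftrightarrow> rep q' t" .
  qed
  ultimately show ?thesis
    unfolding subgroup_index_def by simp
qed

section \<open>Counting \<open>M\<^sub>1\<^sup>m\<close>\<close>

lemma gcd3_eq_1_iff:
  fixes x y z :: nat
  shows "gcd x (gcd y z) = 1 \<longleftrightarrow> (\<forall>p. prime p \<longrightarrow> \<not> (p dvd x \<and> p dvd y \<and> p dvd z))"
proof
  assume "gcd x (gcd y z) = 1"
  then show "\<forall>p. prime p \<longrightarrow> \<not> (p dvd x \<and> p dvd y \<and> p dvd z)"
    by (metis gcd_greatest not_prime_unit is_unit_gcd)
next
  assume h: "\<forall>p. prime p \<longrightarrow> \<not> (p dvd x \<and> p dvd y \<and> p dvd z)"
  show "gcd x (gcd y z) = 1"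
  proof (rule ccontr)
    assume "gcd x (gcd y z) \<noteq> 1"
    then obtain p where "prime p" "p dvd gcd x (gcd y z)"
      using prime_factor_nat by blast
    then show False
      using h by (meson dvd_trans gcd_dvd1 gcd_dvd2)
  qed
qed

lemma gcd3_mod_eq_1:
  fixes x y z x' z' :: nat
  assumes "gcd x (gcd y z) = 1" "x' dvd x" "z' dvd z"
  shows "gcd x' (gcd (y mod z') z') = 1"
proof -
  let ?e = "gcd x' (gcd (y mod z') z')"
  have e: "?e dvd x'" "?e dvd y mod z'" "?e dvd z'"
    by (meson dvd_trans gcd_dvd1 gcd_dvd2)+
  moreover have "?e dvd y"
    using dvd_mod_imp_dvd[OF e(2,3)] .
  ultimately have "?e dvd gcd x (gcd y z)"
    using assms(2,3) by (auto intro: dvd_trans)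
  then show ?thesis
    using assms(1) by simp
qed

text \<open>A common prime factor would divide only one side of the coprime factorization, where the
  component triple is primitive.\<close>
lemma gcd3_mult_eq_1:
  fixes x1 x2 y z1 z2 :: nat
  assumes "coprime (x1 * z1) (x2 * z2)"
    and "gcd x1 (gcd (y mod z1) z1) = 1" "gcd x2 (gcd (y mod z2) z2) = 1"
  shows "gcd (x1 * x2) (gcd y (z1 * z2)) = 1"
proof -
  have side: False
    if "prime p" "p dvd a" "coprime (a*c) (b*d)" "p dvd c*d" "p dvd y" "gcd a (gcd (y mod c) c) = 1"
    for p a b c d :: nat
  proof -
    have "\<not> p dvd d"
      using that(1-3) by (meson coprime_common_divisor dvd_mult dvd_mult2 not_prime_unit)
    then have "p dvd c"
      using that(1,4) by (simp add: prime_dvd_mult_iff)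
    then have "p dvd gcd a (gcd (y mod c) c)"
      using that(2,5) by (simp add: dvd_mod)
    then show False
      using that(1,6) by simp
  qed
  show ?thesis
    unfolding gcd3_eq_1_iff
  proof (intro allI impI notI)
    fix p :: nat assume p: "prime p" "p dvd x1 * x2 \<and> p dvd y \<and> p dvd z1 * z2"
    then consider "p dvd x1" | "p dvd x2"
      by (auto simp: prime_dvd_mult_iff)
    then show False
    proof cases
      case 1
      then show False
        using side[OF p(1) 1 assms(1) _ _ assms(2)] p(2) by blast
    next
      case 2
      have "coprime (x2 * z2) (x1 * z1)" "p dvd z2 * z1"
        using assms(1) p(2) by (simp_all add: coprime_commute mult.commute)
      then show False
        using side[OF p(1) 2 _ _ _ assms(3)] p(2) by blast
    qed
  qed
qed

definition crt_nat :: "nat \<Rightarrow> nat \<Rightarrow> nat \<Rightarrow> nat \<Rightarrow> nat" where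
  "crt_nat z1 z2 y1 y2 = (THE y. y < z1*z2 \<and> [y = y1] (mod z1) \<and> [y = y2] (mod z2))"

lemma crt_nat_correct:
  assumes "coprime z1 z2" "z1 > 0" "z2 > 0"
  shows "crt_nat z1 z2 y1 y2 < z1*z2" "[crt_nat z1 z2 y1 y2 = y1] (mod z1)"
    "[crt_nat z1 z2 y1 y2 = y2] (mod z2)"
proof -
  have "\<exists>!y. y < z1*z2 \<and> [y = y1] (mod z1) \<and> [y = y2] (mod z2)"
    using assms by (intro binary_chinese_remainder_unique_nat) auto
  from theI'[OF this] show "crt_nat z1 z2 y1 y2 < z1*z2" "[crt_nat z1 z2 y1 y2 = y1] (mod z1)"
      "[crt_nat z1 z2 y1 y2 = y2] (mod z2)"
    unfolding crt_nat_def by blast+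
qed

lemma crt_nat_unique:
  assumes "coprime z1 z2" "z1 > 0" "z2 > 0" "y < z1*z2" "[y = y1] (mod z1)" "[y = y2] (mod z2)"
  shows "crt_nat z1 z2 y1 y2 = y"
  unfolding crt_nat_def
  by (rule the1_equality) (rule binary_chinese_remainder_unique_nat, use assms in auto)

lemma coprime_factorization_unique:
  fixes a1 a2 a1' a2' n q :: nat
  assumes "a1 dvd n" "a1' dvd n" "a2 dvd q" "a2' dvd q" "coprime n q" "a1 * a2 = a1' * a2'"
    "a1 > 0"
  shows "a1 = a1'" "a2 = a2'"
proof -
  have "coprime a1 a2'" "coprime a1' a2"
    using assms(1-5) by (auto intro: coprime_divisors)
  moreover have "a1 dvd a1' * a2'" "a1' dvd a1 * a2"
    using assms(6) by (metis dvd_triv_left)+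
  ultimately have "a1 dvd a1'" "a1' dvd a1"
    by (simp_all add: coprime_dvd_mult_left_iff)
  then show "a1 = a1'"
    by (rule dvd_antisym)
  then show "a2 = a2'"
    using assms(6,7) by simp
qed

definition primitive_hnf :: "nat \<Rightarrow> (nat \<times> nat \<times> nat) set" where
  "primitive_hnf n = {(x, y, z). x > 0 \<and> z > 0 \<and> x * z = n \<and> y < z \<and> gcd x (gcd y z) = 1}"

lemma mem_primitive_hnf_iff:
  "(x, y, z) \<in> primitive_hnf n \<longleftrightarrow> x > 0 \<and> z > 0 \<and> x * z = n \<and> y < z \<and> gcd x (gcd y z) = 1"
  by (simp add: primitive_hnf_def)

lemma M1_eq_image_primitive_hnf:
  "M1 m = (\<lambda>(x, y, z). (int x, int y, int z)) ` {t \<in> primitive_hnf m. odd (fst t)}"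
proof (intro set_eqI iffI)
  fix t assume "t \<in> M1 m"
  then obtain x y z where t: "t = (x, y, z)" "x > 0" "z > 0" "x*z = int m" "0 \<le> y" "y < z"
    "gcd x (gcd y z) = 1" "odd x"
    by (auto simp: M1_def)
  then obtain x' y' z' where xyz: "x = int x'" "y = int y'" "z = int z'"
    by (metis nonneg_int_cases less_imp_le)
  have "int (gcd x' (gcd y' z')) = 1" "int (x' * z') = int m"
    using t xyz by simp_all
  then have "gcd x' (gcd y' z') = 1" "x' * z' = m"
    by (simp_all only: of_nat_eq_1_iff of_nat_eq_iff)
  with t xyz have "(x', y', z') \<in> {t \<in> primitive_hnf m. odd (fst t)}"
    by (simp add: mem_primitive_hnf_iff)
  then show "t \<in> (\<lambda>(x, y, z). (int x, int y, int z)) ` {t \<in> primitive_hnf m. odd (fst t)}"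
    using t(1) xyz by force
next
  fix t assume "t \<in> (\<lambda>(x, y, z). (int x, int y, int z)) ` {t \<in> primitive_hnf m. odd (fst t)}"
  then obtain x y z where "t = (int x, int y, int z)" "(x, y, z) \<in> primitive_hnf m" "odd x"
    by auto
  then show "t \<in> M1 m"
    by (auto simp: M1_def mem_primitive_hnf_iff simp flip: of_nat_mult)
qed

lemma card_M1: "card (M1 m) = card {t \<in> primitive_hnf m. odd (fst t)}"
  unfolding M1_eq_image_primitive_hnf by (rule card_image) (auto simp: inj_on_def)

definition hnf_lift :: "nat \<Rightarrow> (nat \<times> nat \<times> nat) \<times> nat \<Rightarrow> nat \<times> nat \<times> nat" where
  "hnf_lift a = (\<lambda>((x, y, z), t). (x, y + t*z, 2^a * z))"

lemma hnf_lift_in_primitive_hnf: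
  assumes "odd b" "u \<in> primitive_hnf b \<times> {..<2^a}"
  shows "hnf_lift a u \<in> {w \<in> primitive_hnf (2^a * b). odd (fst w)}"
proof -
  obtain x y z t where u: "u = ((x, y, z), t)" "x > 0" "z > 0" "x*z = b" "y < z"
    "gcd x (gcd y z) = 1" "t < 2^a"
    using assms(2) by (cases u) (auto simp: mem_primitive_hnf_iff)
  have "odd x"
    using assms(1) u(4) by auto
  have "y + t*z < (t + 1)*z"
    using u(5) by simp
  also have "\<dots> \<le> 2^a*z"
    using u(7) by (intro mult_right_mono) auto
  finally have "y + t*z < 2^a*z" .
  moreover have "gcd (x * 1) (gcd (y + t*z) (z * 2^a)) = 1"
    by (rule gcd3_mult_eq_1) (use u assms(1) in simp_all)
  moreover have "x * (2^a*z) = 2^a * b"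
    using u(4) by (simp add: algebra_simps)
  ultimately show ?thesis
    unfolding u(1) hnf_lift_def using u(2,3) \<open>odd x\<close> by (simp add: mem_primitive_hnf_iff mult.commute)
qed

lemma odd_primitive_hnf_subset_hnf_lift:
  assumes "odd b"
  shows "{w \<in> primitive_hnf (2^a * b). odd (fst w)} \<subseteq> hnf_lift a ` (primitive_hnf b \<times> {..<2^a})"
proof
  fix w assume "w \<in> {w \<in> primitive_hnf (2^a * b). odd (fst w)}"
  then obtain X Y Z where w: "w = (X, Y, Z)" "X > 0" "Z > 0" "X*Z = 2^a * b" "Y < Z"
    "gcd X (gcd Y Z) = 1" "odd X"
    by (cases w) (auto simp: mem_primitive_hnf_iff)
  have "X dvd 2^a * b"
    using w(4) by (metis dvd_triv_left)
  moreover have "coprime X (2^a)"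
    using w(7) by simp
  ultimately have "X dvd b"
    by (simp add: coprime_dvd_mult_right_iff)
  then obtain z where b: "b = X*z" ..
  then have "z > 0"
    using assms by (cases z) auto
  have Z: "Z = 2^a*z"
    using w(2,4) b by (simp add: algebra_simps)
  define y where "y = Y mod z"
  define t where "t = Y div z"
  have "t < 2^a"
    unfolding t_def using w(5) Z \<open>z > 0\<close> by (simp add: div_less_iff_less_mult)
  moreover have "gcd X (gcd y z) = 1"
    unfolding y_def using Z by (intro gcd3_mod_eq_1[OF w(6) dvd_refl]) simp
  moreover have "y < z"
    unfolding y_def using \<open>z > 0\<close> by simp
  ultimately have "((X, y, z), t) \<in> primitive_hnf b \<times> {..<2^a}"
    using w(2) \<open>z > 0\<close> b by (simp add: mem_primitive_hnf_iff)
  moreover have "hnf_lift a ((X, y, z), t) = w"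
    unfolding hnf_lift_def w(1) Z y_def t_def by simp
  ultimately show "w \<in> hnf_lift a ` (primitive_hnf b \<times> {..<2^a})"
    by (metis image_eqI)
qed

lemma inj_on_hnf_lift: "inj_on (hnf_lift a) (primitive_hnf b \<times> {..<2^a})"
proof (rule inj_onI)
  fix u u' assume "u \<in> primitive_hnf b \<times> {..<2^a}" "u' \<in> primitive_hnf b \<times> {..<2^a}"
    "hnf_lift a u = hnf_lift a u'"
  then obtain x y z t x' y' z' t' where
    u: "u = ((x, y, z), t)" "u' = ((x', y', z'), t')" "y < z" "y' < z'" and
    eq: "x = x'" "z = z'" "y + t*z = y' + t'*z"
    by (cases u, cases u') (auto simp: hnf_lift_def mem_primitive_hnf_iff)
  have "y = (y + t*z) mod z" "t = (y + t*z) div z"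
    using u(3) by simp_all
  moreover have "y' = (y' + t'*z) mod z" "t' = (y' + t'*z) div z"
    using u(4) eq(2) by simp_all
  ultimately show "u = u'"
    using u(1,2) eq by metis
qed

lemma card_odd_primitive_hnf:
  assumes "odd b"
  shows "card {w \<in> primitive_hnf (2^a * b). odd (fst w)} = 2^a * card (primitive_hnf b)"
proof -
  have "hnf_lift a ` (primitive_hnf b \<times> {..<2^a}) = {w \<in> primitive_hnf (2^a * b). odd (fst w)}"
    using hnf_lift_in_primitive_hnf[OF assms] odd_primitive_hnf_subset_hnf_lift[OF assms] by blast
  then have "card {w \<in> primitive_hnf (2^a * b). odd (fst w)} = card (primitive_hnf b \<times> {..<(2::nat)^a})"
    using card_image[OF inj_on_hnf_lift] by metis
  then show ?thesis
    by (simp add: card_cartesian_product)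
qed

definition hnf_combine :: "(nat \<times> nat \<times> nat) \<times> (nat \<times> nat \<times> nat) \<Rightarrow> nat \<times> nat \<times> nat" where
  "hnf_combine = (\<lambda>((x1, y1, z1), (x2, y2, z2)). (x1 * x2, crt_nat z1 z2 y1 y2, z1 * z2))"

lemma hnf_combine_in_primitive_hnf:
  fixes n q :: nat
  assumes cop: "coprime n q" and u: "u \<in> primitive_hnf n \<times> primitive_hnf q"
  shows "hnf_combine u \<in> primitive_hnf (n * q)"
proof -
  obtain x1 y1 z1 x2 y2 z2 where u_eq: "u = ((x1, y1, z1), (x2, y2, z2))"
    by (metis prod.exhaust)
  have h1: "x1 > 0" "z1 > 0" "x1*z1 = n" "y1 < z1" "gcd x1 (gcd y1 z1) = 1"
    and h2: "x2 > 0" "z2 > 0" "x2*z2 = q" "y2 < z2" "gcd x2 (gcd y2 z2) = 1"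
    using u unfolding u_eq by (simp_all add: mem_primitive_hnf_iff)
  define y where "y = crt_nat z1 z2 y1 y2"
  have "coprime z1 z2"
    using h1(3) h2(3) cop by (metis coprime_divisors dvd_triv_right)
  then have y: "y < z1*z2" "y mod z1 = y1" "y mod z2 = y2"
    using crt_nat_correct[of z1 z2 y1 y2] h1(2,4) h2(2,4) by (auto simp: y_def cong_def)
  have "gcd (x1*x2) (gcd y (z1*z2)) = 1"
    using cop h1(3,5) h2(3,5) y(2,3) by (intro gcd3_mult_eq_1) simp_all
  moreover have "x1*x2 * (z1*z2) = n*q"
    using h1(3) h2(3) by (simp add: algebra_simps)
  ultimately show ?thesis
    unfolding u_eq hnf_combine_def using h1 h2 y(1) by (simp add: mem_primitive_hnf_iff y_def)
qed

lemma inj_on_hnf_combine: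
  fixes n q :: nat
  assumes cop: "coprime n q"
  shows "inj_on hnf_combine (primitive_hnf n \<times> primitive_hnf q)"
proof (rule inj_onI)
  fix u u' assume u: "u \<in> primitive_hnf n \<times> primitive_hnf q" "u' \<in> primitive_hnf n \<times> primitive_hnf q"
    and eq: "hnf_combine u = hnf_combine u'"
  obtain x1 y1 z1 x2 y2 z2 x1' y1' z1' x2' y2' z2' where
    u_eq: "u = ((x1, y1, z1), (x2, y2, z2))" "u' = ((x1', y1', z1'), (x2', y2', z2'))"
    by (metis prod.exhaust)
  have h1: "x1 > 0" "z1 > 0" "x1*z1 = n" "y1 < z1" "x1'*z1' = n" "y1' < z1'"
    and h2: "z2 > 0" "x2*z2 = q" "y2 < z2" "x2'*z2' = q" "y2' < z2'"
    using u unfolding u_eq by (simp_all add: mem_primitive_hnf_iff)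
  have dvd: "x1 dvd n" "z1 dvd n" "x1' dvd n" "z1' dvd n" "x2 dvd q" "z2 dvd q" "x2' dvd q" "z2' dvd q"
    using h1 h2 by (metis dvd_triv_left dvd_triv_right)+
  have e: "x1*x2 = x1'*x2'" "crt_nat z1 z2 y1 y2 = crt_nat z1' z2' y1' y2'" "z1*z2 = z1'*z2'"
    using eq unfolding u_eq hnf_combine_def by auto
  have x: "x1 = x1'" "x2 = x2'"
    using coprime_factorization_unique[OF dvd(1,3,5,7) cop e(1) h1(1)] by simp_all
  have z: "z1 = z1'" "z2 = z2'"
    using coprime_factorization_unique[OF dvd(2,4,6,8) cop e(3) h1(2)] by simp_all
  have "coprime z1 z2"
    using dvd(2,6) cop by (rule coprime_divisors)
  note crt = crt_nat_correct[OF this h1(2) h2(1)]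
  have "y1 = y1'" "y2 = y2'"
    using crt(2,3)[of y1 y2] crt(2,3)[of y1' y2'] e(2) h1(4,6) h2(3,5) z by (simp_all add: cong_def)
  then show "u = u'"
    unfolding u_eq using x z by simp
qed

lemma coprime_mult_eq_split:
  fixes n q u v :: nat
  assumes "coprime n q" "u * v = n * q" "coprime n v" "coprime q u" "n > 0" "q > 0"
  shows "u = n" "v = q"
proof -
  have "n dvd u * v" "q dvd u * v"
    using assms(2) by simp_all
  then have "n dvd u" "q dvd v"
    using assms(3,4) by (simp_all add: coprime_dvd_mult_left_iff coprime_dvd_mult_right_iff)
  then obtain k l where u: "u = n*k" and v: "v = q*l"
    by blast
  have "n*q*(k*l) = n*q*1"
    using assms(2) unfolding u v by (simp add: algebra_simps)
  then have "k = 1" "l = 1"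
    using assms(5,6) by simp_all
  then show "u = n" "v = q"
    using u v by simp_all
qed

lemma primitive_hnf_mult_subset:
  fixes n q :: nat
  assumes cop: "coprime n q" and "n > 0" "q > 0"
  shows "primitive_hnf (n * q) \<subseteq> hnf_combine ` (primitive_hnf n \<times> primitive_hnf q)"
proof
  fix w assume "w \<in> primitive_hnf (n * q)"
  then obtain x y z where w: "w = (x, y, z)" "x > 0" "z > 0" "x*z = n*q" "y < z" "gcd x (gcd y z) = 1"
    by (cases w) (auto simp: mem_primitive_hnf_iff)
  have "x dvd n*q" "z dvd n*q"
    using w(4) by (metis dvd_triv_left dvd_triv_right)+
  obtain x1 x2 where x: "x = x1*x2" "x1 dvd n" "x2 dvd q"
    using division_decomp[OF \<open>x dvd n*q\<close>] by blast
  obtain z1 z2 where z: "z = z1*z2" "z1 dvd n" "z2 dvd q"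
    using division_decomp[OF \<open>z dvd n*q\<close>] by blast
  have pos: "x1 > 0" "x2 > 0" "z1 > 0" "z2 > 0"
    using w(2,3) unfolding x(1) z(1) by simp_all
  have prod: "(x1*z1) * (x2*z2) = n*q"
    using w(4) x(1) z(1) by (simp add: algebra_simps)
  have "coprime q n"
    using cop by (simp add: coprime_commute)
  then have cops: "coprime n (x2*z2)" "coprime q (x1*z1)"
    using coprime_divisors[OF dvd_refl x(3) cop] coprime_divisors[OF dvd_refl z(3) cop]
      coprime_divisors[OF dvd_refl x(2)] coprime_divisors[OF dvd_refl z(2)] by simp_all
  note n_q = coprime_mult_eq_split[OF cop prod cops assms(2,3)]
  define y1 where "y1 = y mod z1"
  define y2 where "y2 = y mod z2"
  have "gcd x1 (gcd y1 z1) = 1" "gcd x2 (gcd y2 z2) = 1"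
    unfolding y1_def y2_def using gcd3_mod_eq_1[OF w(6)] x(1) z(1) by simp_all
  then have "((x1, y1, z1), (x2, y2, z2)) \<in> primitive_hnf n \<times> primitive_hnf q"
    using pos n_q by (simp add: mem_primitive_hnf_iff y1_def y2_def)
  moreover have "coprime z1 z2"
    using z(2,3) cop by (rule coprime_divisors)
  then have "crt_nat z1 z2 y1 y2 = y"
    by (rule crt_nat_unique[OF _ pos(3,4)]) (use w(5) z(1) in \<open>simp_all add: y1_def y2_def cong_def\<close>)
  then have "hnf_combine ((x1, y1, z1), (x2, y2, z2)) = w"
    unfolding hnf_combine_def w(1) x(1) z(1) by simp
  ultimately show "w \<in> hnf_combine ` (primitive_hnf n \<times> primitive_hnf q)"
    by (metis image_eqI)
qed

lemma card_primitive_hnf_mult: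
  fixes n q :: nat
  assumes "coprime n q" "n > 0" "q > 0"
  shows "card (primitive_hnf (n * q)) = card (primitive_hnf n) * card (primitive_hnf q)"
proof -
  have "hnf_combine ` (primitive_hnf n \<times> primitive_hnf q) \<subseteq> primitive_hnf (n * q)"
    using hnf_combine_in_primitive_hnf[OF assms(1)] by (rule image_subsetI)
  then have "hnf_combine ` (primitive_hnf n \<times> primitive_hnf q) = primitive_hnf (n * q)"
    using primitive_hnf_mult_subset[OF assms] by (rule subset_antisym)
  then have "card (primitive_hnf (n * q)) = card (primitive_hnf n \<times> primitive_hnf q)"
    using card_image[OF inj_on_hnf_combine[OF assms(1)]] by simp
  then show ?thesis
    by (simp add: card_cartesian_product)
qed

lemma sum_telescope_antimono_nat:
  fixes f :: "nat \<Rightarrow> nat"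
  assumes "m \<le> n" "antimono f"
  shows "(\<Sum>i\<in>{m..<n}. f i - f (Suc i)) = f m - f n"
  using assms(1)
proof (induction n rule: dec_induct)
  case (step n)
  have "f (Suc n) \<le> f n" "f n \<le> f m"
    using assms(2) step.hyps(1) by (auto simp: antimono_def)
  then show ?case
    using step by simp
qed simp

lemma card_not_dvd_below_prime_power:
  fixes p j :: nat
  assumes "prime p" "j \<ge> 1"
  shows "card {y. y < p^j \<and> \<not> p dvd y} = p^j - p^(j-1)"
proof -
  have "p > 0"
    using assms(1) prime_gt_0_nat by blast
  have pj: "p^j = p * p^(j-1)"
    using assms(2) by (simp flip: power_Suc)
  have "{y. y < p^j \<and> p dvd y} = (\<lambda>w. p*w) ` {..<p^(j-1)}"
    using \<open>p > 0\<close> unfolding pj by (auto elim!: dvdE)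
  then have "card {y. y < p^j \<and> p dvd y} = p^(j-1)"
    using \<open>p > 0\<close> by (simp add: card_image inj_on_def)
  moreover have "{y. y < p^j \<and> \<not> p dvd y} \<union> {y. y < p^j \<and> p dvd y} = {..<p^j}"
    and "{y. y < p^j \<and> \<not> p dvd y} \<inter> {y. y < p^j \<and> p dvd y} = {}"
    by auto
  ultimately show ?thesis
    using card_Un_disjoint[of "{y. y < p^j \<and> \<not> p dvd y}" "{y. y < p^j \<and> p dvd y}"] by simp
qed

lemma card_primitive_hnf_prime_power_eq_sum:
  fixes p k :: nat
  assumes p: "prime p"
  shows "card (primitive_hnf (p^k)) = (\<Sum>i\<le>k. card {y. y < p^(k-i) \<and> gcd (p^i) (gcd y (p^(k-i))) = 1})"
proof -
  have p1: "p > 1"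
    using p prime_gt_1_nat by blast
  define Y where "Y i = {y. y < p^(k-i) \<and> gcd (p^i) (gcd y (p^(k-i))) = 1}" for i
  define F :: "nat \<times> nat \<Rightarrow> nat \<times> nat \<times> nat" where "F = (\<lambda>(i, y). (p^i, y, p^(k-i)))"
  have "primitive_hnf (p^k) = F ` (SIGMA i:{..k}. Y i)"
  proof (intro set_eqI iffI)
    fix w assume "w \<in> primitive_hnf (p^k)"
    then obtain x y z where w: "w = (x, y, z)" "x*z = p^k" "y < z" "gcd x (gcd y z) = 1"
      by (cases w) (auto simp: mem_primitive_hnf_iff)
    then obtain i where i: "i \<le> k" "x = p^i"
      using divides_primepow_nat[OF p] by (metis dvd_triv_left)
    moreover have "p^i * z = p^i * p^(k-i)"
      using w(2) i by (simp flip: power_add)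
    ultimately have "z = p^(k-i)"
      using p1 by simp
    then show "w \<in> F ` (SIGMA i:{..k}. Y i)"
      using i w unfolding F_def Y_def by (auto intro!: image_eqI[of _ _ "(i, y)"])
  next
    fix w assume "w \<in> F ` (SIGMA i:{..k}. Y i)"
    then obtain i y where "i \<le> k" "y \<in> Y i" "w = F (i, y)"
      by auto
    moreover have "p^i * p^(k-i) = p^k"
      using \<open>i \<le> k\<close> by (simp flip: power_add)
    ultimately show "w \<in> primitive_hnf (p^k)"
      using p1 unfolding F_def Y_def by (simp add: mem_primitive_hnf_iff)
  qed
  moreover have "inj_on F (SIGMA i:{..k}. Y i)"
    using p1 by (auto simp: inj_on_def F_def)
  ultimately show ?thesis
    by (simp add: card_image card_SigmaI Y_def)
qed

lemma gcd_prime_powers_eq_1_iff: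
  fixes p :: nat
  assumes p: "prime p" and "0 < i" "i < k"
  shows "gcd (p^i) (gcd y (p^(k-i))) = 1 \<longleftrightarrow> \<not> p dvd y"
proof
  have "p dvd p^i" "p dvd p^(k-i)"
    using assms(2,3) by (simp_all add: dvd_power)
  moreover assume "gcd (p^i) (gcd y (p^(k-i))) = 1"
  ultimately show "\<not> p dvd y"
    using p by (metis gcd_greatest not_prime_unit is_unit_gcd)
next
  assume "\<not> p dvd y"
  have "r = p" if "prime r" "r dvd p^i" for r
  proof -
    have "r dvd p"
      using that prime_dvd_power by blast
    then show ?thesis
      using that(1) p by (simp add: primes_dvd_imp_eq)
  qed
  then show "gcd (p^i) (gcd y (p^(k-i))) = 1"
    using \<open>\<not> p dvd y\<close> unfolding gcd3_eq_1_iff by blast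
qed

text \<open>All \<open>y\<close> qualify for \<open>x = 1\<close>, only \<open>y = 0\<close> for \<open>x = p\<^sup>k\<close>, and otherwise exactly the \<open>y\<close>
  prime to \<open>p\<close>; these middle terms telescope to \<open>p\<^sup>k\<^sup>-\<^sup>1 - 1\<close>.\<close>
lemma card_primitive_hnf_prime_power:
  fixes p k :: nat
  assumes p: "prime p" and k: "k \<ge> 1"
  shows "card (primitive_hnf (p^k)) = p^k + p^(k-1)"
proof -
  have p1: "p > 1"
    using p prime_gt_1_nat by blast
  define Y where "Y i = {y. y < p^(k-i) \<and> gcd (p^i) (gcd y (p^(k-i))) = 1}" for i
  have "card (primitive_hnf (p^k)) = (\<Sum>i\<le>k. card (Y i))"
    unfolding Y_def by (rule card_primitive_hnf_prime_power_eq_sum[OF p])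
  also have "\<dots> = card (Y 0) + card (Y k) + (\<Sum>i\<in>{1..<k}. card (Y i))"
  proof -
    have "{..k} = insert 0 (insert k {1..<k})"
      using k by auto
    then show ?thesis
      using k by simp
  qed
  also have "card (Y 0) = p^k"
    unfolding Y_def by simp
  also have "Y k = {0}"
    unfolding Y_def by auto
  also have "(\<Sum>i\<in>{1..<k}. card (Y i)) = (\<Sum>i\<in>{1..<k}. p^(k-i) - p^(k - Suc i))"
  proof (rule sum.cong)
    fix i assume "i \<in> {1..<k}"
    then have "Y i = {y. y < p^(k-i) \<and> \<not> p dvd y}"
      unfolding Y_def using gcd_prime_powers_eq_1_iff[OF p] by simp
    then show "card (Y i) = p^(k-i) - p^(k - Suc i)"
      using card_not_dvd_below_prime_power[OF p, of "k-i"] \<open>i \<in> {1..<k}\<close> by (simp add: Suc_le_eq)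
  qed simp
  also have "\<dots> = p^(k-1) - 1"
  proof -
    have "antimono (\<lambda>i. p^(k-i))"
      using p1 by (auto simp: antimono_def intro: power_increasing)
    then show ?thesis
      using sum_telescope_antimono_nat[of 1 k "\<lambda>i. p^(k-i)"] k by simp
  qed
  finally show ?thesis
    using k p1 by simp
qed

lemma dpsi_prime_power:
  fixes p k :: nat
  assumes p: "prime p" and k: "k \<ge> 1"
  shows "dpsi (p^k) = real (p^k + p^(k-1))"
proof -
  have "prime_factors (p^k) = {p}"
    using p k by (simp add: prime_factorization_prime_power)
  then have "dpsi (p^k) = real (p^k) + real (p^k) / real p"
    by (simp add: dpsi_def algebra_simps)
  also have "real (p^k) / real p = real (p^(k-1))"
    using k prime_gt_0_nat[OF p] by (simp add: power_eq_if)
  finally show ?thesis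
    by simp
qed

lemma dpsi_mult:
  fixes n q :: nat
  assumes "coprime n q" "n > 0" "q > 0"
  shows "dpsi (n * q) = dpsi n * dpsi q"
proof -
  have "prime_factors (n * q) = prime_factors n \<union> prime_factors q"
    using assms(2,3) by (simp add: prime_factors_product)
  moreover have "prime_factors n \<inter> prime_factors q = {}"
    using assms(1) by (auto simp: in_prime_factors_iff dest: coprime_common_divisor not_prime_unit)
  ultimately have "(\<Prod>p\<in>prime_factors (n * q). 1 + 1 / real p)
      = (\<Prod>p\<in>prime_factors n. 1 + 1 / real p) * (\<Prod>p\<in>prime_factors q. 1 + 1 / real p)"
    by (simp add: prod.union_disjoint)
  then show ?thesis
    by (simp add: dpsi_def algebra_simps)
qed

lemma multiplicative_eqI:
  fixes f g :: "nat \<Rightarrow> real"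
  assumes one: "f 1 = g 1"
    and f_mult: "\<And>n q. coprime n q \<Longrightarrow> n > 0 \<Longrightarrow> q > 0 \<Longrightarrow> f (n * q) = f n * f q"
    and g_mult: "\<And>n q. coprime n q \<Longrightarrow> n > 0 \<Longrightarrow> q > 0 \<Longrightarrow> g (n * q) = g n * g q"
    and prime_power: "\<And>p k. prime p \<Longrightarrow> k \<ge> 1 \<Longrightarrow> f (p^k) = g (p^k)"
    and "n > 0"
  shows "f n = g n"
  using \<open>n > 0\<close>
proof (induction n rule: less_induct)
  case (less n)
  show ?case
  proof (cases "n = 1")
    case False
    then obtain p where p: "prime p" "p dvd n"
      using prime_factor_nat by blast
    obtain r where r: "n = p ^ multiplicity p n * r" "\<not> p dvd r"
      using multiplicity_decompose'[of n p] less.prems p(1) by (metis neq0_conv not_prime_unit)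
    define k where "k = multiplicity p n"
    have "k \<ge> 1"
      using r p(2) unfolding k_def by (metis One_nat_def not_less_eq_eq power_0 mult_1 le_0_eq)
    have "r > 0" "p > 1"
      using r(1) less.prems p(1) prime_gt_1_nat by (auto intro: gr0I)
    have "coprime (p^k) r"
      using p(1) r(2) by (simp add: prime_imp_coprime)
    have "r < n"
    proof -
      have "p^k > 1"
        using \<open>p > 1\<close> \<open>k \<ge> 1\<close> one_less_power[of p k] by simp
      then show ?thesis
        using r(1) \<open>r > 0\<close> unfolding k_def[symmetric] by simp
    qed
    have "f n = f (p^k) * f r"
      using r(1) f_mult[OF \<open>coprime (p^k) r\<close>] \<open>p > 1\<close> \<open>r > 0\<close> unfolding k_def by simp
    also have "\<dots> = g (p^k) * g r"
      using prime_power[OF p(1) \<open>k \<ge> 1\<close>] less.IH[OF \<open>r < n\<close> \<open>r > 0\<close>] by simp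
    also have "\<dots> = g n"
      using r(1) g_mult[OF \<open>coprime (p^k) r\<close>] \<open>p > 1\<close> \<open>r > 0\<close> unfolding k_def by simp
    finally show ?thesis .
  qed (use one in simp)
qed

lemma card_primitive_hnf_eq_dpsi:
  assumes "n > 0"
  shows "real (card (primitive_hnf n)) = dpsi n"
proof (rule multiplicative_eqI[where f = "\<lambda>n. real (card (primitive_hnf n))"])
  have "primitive_hnf 1 = {(1, 0, 1)}"
    by (auto simp: primitive_hnf_def)
  then show "real (card (primitive_hnf 1)) = dpsi 1"
    by (simp add: dpsi_def)
qed (use assms in \<open>simp_all add: card_primitive_hnf_mult dpsi_mult card_primitive_hnf_prime_power
  dpsi_prime_power\<close>)

theorem lemma2p3:
  fixes m a b :: nat
  assumes "a > 0" and "odd b" and "m = 2 ^ a * b"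
  shows "real (card (M1 m)) = 2 ^ a * dpsi b \<and>
         2 ^ a * dpsi b =
           real (subgroup_index Gamma0_2 (Gamma0_2 \<inter> conj_by (mat2 1 0 0 (real m)) Gamma0_2_plus))"
proof -
  have "b > 0" "m > 0"
    using assms(2,3) by (auto intro: gr0I)
  have "real (card (M1 m)) = 2 ^ a * dpsi b"
    using card_M1 card_odd_primitive_hnf[OF assms(2)] card_primitive_hnf_eq_dpsi[OF \<open>b > 0\<close>]
      assms(3) by simp
  moreover have "subgroup_index Gamma0_2 (Gamma0_2 \<inter> conj_by (mat2 1 0 0 (real m)) Gamma0_2_plus)
      = card (M1 m)"
    using Gamma0_2_Int_conj_Gamma0_2_plus[OF \<open>m > 0\<close>] index_Gamma00_eq_card_M1[OF \<open>m > 0\<close>]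
    by (simp add: Gamma0_2_eq_Gamma00)
  ultimately show ?thesis
    by simp
qed

end
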